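(* Let $P$ be an irreducible aperiodic row-stochastic $n\times n$ matrix with centrality vector $\pi$. Then for every $z\in[0,1]^n$ the limit $\lim_{t\to\infty}W(z)^t=H(z)$ exists, where $H(z)$ is a row-stochastic matrix such that: (i) if $\mathcal S(z)=\emptyset$, then $H(z)=\mathbf{1}p(z)'$, where $$p(z)=\frac1{\gamma(z)}(I-[z])^{-1}\pi,\qquad \gamma(z)=\sum_{i\in\mathcal V}\frac{\pi_i}{1-z_i};$$ (ii) if $\mathcal S(z)\ne\emptyset$, then $H(z)$ is the unique solution of the linear system $$H_{ij}(z)=\sum_{k\in\mathcal V}P_{ik}H_{kj}(z)\quad\forall i\notin\mathcal S(z),\ j\in\mathcal V;\qquad H_{ij}(z)=\delta^i_j\quad\forall i\in\mathcal S(z),\ j\in\mathcal V,$$ where $\delta^i_j=1$ if $i=j$ and $0$ otherwise.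
   Context: $\mathcal V=\{1,\dots,n\}$. A row-stochastic matrix is a nonnegative square matrix with all row sums equal to $1$. $P$ is irreducible if the graph on $\mathcal V$ with edge $(i,j)$ iff $P_{ij}>0$ is strongly connected, and aperiodic if the gcd of the lengths of the cycles of this graph is $1$. The centrality vector $\pi$ is the unique probability vector with $P'\pi=\pi$ (it satisfies $\pi>0$). For $z\in[0,1]^n$, $[z]$ is the diagonal matrix with diagonal $z$, $W(z)=(I-[z])P+[z]$, and $\mathcal S(z)=\{i\in\mathcal V: z_i=1\}$. *)

theory Defs
  imports "HOL-Analysis.Analysis"
begin

text \<open>Square matrices over a finite index type 'n (the vertex set V, with n = CARD('n)).\<close>

primrec mat_pow :: "real^'n^'n \<Rightarrow> nat \<Rightarrow> real^'n^'n" where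
  "mat_pow A 0 = mat 1"
| "mat_pow A (Suc t) = mat_pow A t ** A"

definition row_stochastic :: "real^'n^'n \<Rightarrow> bool" where
  "row_stochastic A \<longleftrightarrow> (\<forall>i j. A $ i $ j \<ge> 0) \<and> (\<forall>i. (\<Sum>j\<in>UNIV. A $ i $ j) = 1)"

definition graph_edges :: "real^'n^'n \<Rightarrow> ('n \<times> 'n) set" where
  "graph_edges A = {(i, j). A $ i $ j > 0}"

definition irreducible_mat :: "real^'n^'n \<Rightarrow> bool" where
  "irreducible_mat A \<longleftrightarrow> (\<forall>i j. (i, j) \<in> (graph_edges A)\<^sup>*)"

definition cycle_lengths :: "real^'n^'n \<Rightarrow> nat set" where
  "cycle_lengths A = {m. m > 0 \<and> (\<exists>i. (i, i) \<in> (graph_edges A) ^^ m)}"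

definition aperiodic_mat :: "real^'n^'n \<Rightarrow> bool" where
  "aperiodic_mat A \<longleftrightarrow> Gcd (cycle_lengths A) = 1"

definition prob_vector :: "real^'n \<Rightarrow> bool" where
  "prob_vector v \<longleftrightarrow> (\<forall>i. v $ i \<ge> 0) \<and> (\<Sum>i\<in>UNIV. v $ i) = 1"

definition diag_mat :: "real^'n \<Rightarrow> real^'n^'n" where
  "diag_mat z = (\<chi> i j. if i = j then z $ i else 0)"

definition W_mat :: "real^'n^'n \<Rightarrow> real^'n \<Rightarrow> real^'n^'n" where
  "W_mat P z = (mat 1 - diag_mat z) ** P + diag_mat z"

definition S_set :: "real^'n \<Rightarrow> 'n set" where
  "S_set z = {i. z $ i = 1}"

definition gamma_fun :: "real^'n \<Rightarrow> real^'n \<Rightarrow> real" where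
  "gamma_fun \<pi> z = (\<Sum>i\<in>UNIV. \<pi> $ i / (1 - z $ i))"

definition p_vec :: "real^'n \<Rightarrow> real^'n \<Rightarrow> real^'n" where
  "p_vec \<pi> z = (1 / gamma_fun \<pi> z) *\<^sub>R (matrix_inv (mat 1 - diag_mat z) *v \<pi>)"

definition ones_outer :: "real^'n \<Rightarrow> real^'n^'n" where
  "ones_outer v = (\<chi> i j. v $ j)"

definition H_system :: "real^'n^'n \<Rightarrow> real^'n \<Rightarrow> real^'n^'n \<Rightarrow> bool" where
  "H_system P z H \<longleftrightarrow>
     (\<forall>i j. i \<notin> S_set z \<longrightarrow> H $ i $ j = (\<Sum>k\<in>UNIV. P $ i $ k * H $ k $ j)) \<and>
     (\<forall>i j. i \<in> S_set z \<longrightarrow> H $ i $ j = (if i = j then 1 else 0))"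

end

theory Submission
  imports Defs
begin

text \<open>If no \<open>z\<^sub>i\<close> equals 1, the graph of \<open>W(z)\<close> contains that of the
  irreducible aperiodic \<open>P\<close>, so some power \<open>W(z)\<^sup>M\<close> is entrywise positive. Doeblin's argument then
  shrinks the range of every column of \<open>W(z)\<^sup>t\<close> geometrically, and the common limit of a column is
  pinned down by the stationary vector \<open>p(z)\<close> of \<open>W(z)\<close>, which is where \<open>(I - [z])\<^sup>-\<^sup>1 \<pi>\<close> comes from.

  If \<open>S(z)\<close> is nonempty, its rows of \<open>W(z)\<close> are unit rows, i.e. absorbing states, and irreducibility
  lets every state reach \<open>S(z)\<close>. The mass outside \<open>S(z)\<close> then decays geometrically, the columns
  indexed by \<open>S(z)\<close> increase, and the limit \<open>H\<close> satisfies \<open>W(z) H = H\<close>. Any solution \<open>X\<close> of the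
  linear system satisfies \<open>W(z)\<^sup>t X = X\<close>, hence \<open>X = H X\<close>; as \<open>H\<close> vanishes outside the columns
  in \<open>S(z)\<close>, where \<open>X\<close> and \<open>H\<close> have the same rows, \<open>H X = H H = H\<close>.\<close>

section \<open>Matrix powers and stochastic matrices\<close>

lemma matrix_mult_nth: "((A::'a::semiring_1^'m^'n) ** B) $ i $ j = (\<Sum>k\<in>UNIV. A $ i $ k * B $ k $ j)"
  by (simp add: matrix_matrix_mult_def)

lemma tendsto_mat_iff:
  fixes X :: "'b \<Rightarrow> 'a::topological_space^'m^'n"
  shows "(X \<longlongrightarrow> H) F \<longleftrightarrow> (\<forall>i j. ((\<lambda>t. X t $ i $ j) \<longlongrightarrow> H $ i $ j) F)"
  by (metis tendsto_vec_nth vec_tendstoI)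

lemma tendsto_matrix_mult:
  fixes X :: "'b \<Rightarrow> real^'m^'n" and Y :: "'b \<Rightarrow> real^'p^'m"
  assumes "(X \<longlongrightarrow> A) F" and "(Y \<longlongrightarrow> B) F"
  shows "((\<lambda>t. X t ** Y t) \<longlongrightarrow> A ** B) F"
  using assms unfolding tendsto_mat_iff matrix_mult_nth by (intro allI tendsto_sum tendsto_mult) auto

lemma mat_pow_add: "mat_pow A (s + t) = mat_pow A s ** mat_pow A t"
  by (induction t) (simp_all add: matrix_mul_assoc)

lemma mat_pow_Suc_left: "mat_pow A (Suc t) = A ** mat_pow A t"
  using mat_pow_add[of A 1 t] by simp

lemma mat_pow_mult_fixed: "A ** X = X \<Longrightarrow> mat_pow A t ** X = X"
  by (induction t) (simp_all add: matrix_mul_assoc[symmetric])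

lemma vector_mat_pow_fixed: "p v* A = p \<Longrightarrow> p v* mat_pow A t = p"
  by (induction t) (simp_all add: vector_matrix_mul_assoc[symmetric])

lemma mat_pow_limit_mult_fixed:
  assumes "mat_pow A \<longlonglongrightarrow> H" and "A ** X = X"
  shows "H ** X = X"
proof -
  have "(\<lambda>t. mat_pow A t ** X) \<longlonglongrightarrow> H ** X"
    using assms(1) tendsto_const by (rule tendsto_matrix_mult)
  then show ?thesis
    unfolding mat_pow_mult_fixed[OF assms(2)] by (simp add: LIMSEQ_const_iff)
qed

lemma mat_pow_limit_fixed:
  assumes "mat_pow A \<longlonglongrightarrow> H"
  shows "A ** H = H"
proof -
  have "(\<lambda>t. mat_pow A (Suc t)) \<longlonglongrightarrow> A ** H"
    unfolding mat_pow_Suc_left using tendsto_const assms by (rule tendsto_matrix_mult)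
  then show ?thesis
    using LIMSEQ_Suc[OF assms] LIMSEQ_unique by blast
qed

lemma diag_mat_mult_nth: "(diag_mat d ** X) $ i $ j = d $ i * X $ i $ j"
  by (simp add: matrix_mult_nth diag_mat_def if_distrib[of "\<lambda>x. x * _"] cong: if_cong)

lemma mat_1_minus_diag_mat: "mat 1 - diag_mat z = diag_mat (\<chi> i. 1 - z $ i)"
  by (simp add: vec_eq_iff diag_mat_def mat_def)

lemma matrix_inv_diag_mat:
  assumes "\<And>i. d $ i \<noteq> (0::real)"
  shows "matrix_inv (diag_mat d) = diag_mat (\<chi> i. 1 / d $ i)"
  unfolding matrix_inv_def
proof (rule some_equality)
  let ?E = "diag_mat (\<chi> i. 1 / d $ i)"
  have "diag_mat d ** ?E = mat 1" and "?E ** diag_mat d = mat 1"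
    using assms by (simp_all add: vec_eq_iff diag_mat_mult_nth) (simp_all add: diag_mat_def mat_def)
  then show "diag_mat d ** ?E = mat 1 \<and> ?E ** diag_mat d = mat 1"
    by blast
  fix B
  assume "diag_mat d ** B = mat 1 \<and> B ** diag_mat d = mat 1"
  have "B = B ** (diag_mat d ** ?E)"
    using \<open>diag_mat d ** ?E = mat 1\<close> by simp
  also have "\<dots> = (B ** diag_mat d) ** ?E"
    by (rule matrix_mul_assoc)
  also have "\<dots> = ?E"
    using \<open>diag_mat d ** B = mat 1 \<and> B ** diag_mat d = mat 1\<close> by simp
  finally show "B = ?E" .
qed

lemma weighted_sum_bounds:
  fixes w v :: "'a \<Rightarrow> real"
  assumes "\<And>k. k \<in> I \<Longrightarrow> 0 \<le> w k" and "\<And>k. k \<in> I \<Longrightarrow> lo \<le> v k \<and> v k \<le> hi"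
  shows "sum w I * lo \<le> (\<Sum>k\<in>I. w k * v k) \<and> (\<Sum>k\<in>I. w k * v k) \<le> sum w I * hi"
  unfolding sum_distrib_right
  using assms by (auto intro!: sum_mono mult_left_mono)

lemma row_stochastic_nonneg: "row_stochastic A \<Longrightarrow> 0 \<le> A $ i $ j"
  by (simp add: row_stochastic_def)

lemma row_stochastic_le_1:
  assumes "row_stochastic A"
  shows "A $ i $ j \<le> 1"
proof -
  have "A $ i $ j \<le> (\<Sum>k\<in>UNIV. A $ i $ k)"
    using assms by (intro member_le_sum) (auto simp: row_stochastic_def)
  then show ?thesis
    using assms by (simp add: row_stochastic_def)
qed

lemma row_stochastic_mult:
  assumes "row_stochastic A" and "row_stochastic B"
  shows "row_stochastic (A ** B)"
proof -
  have "(\<Sum>j\<in>UNIV. (A ** B) $ i $ j) = (\<Sum>k\<in>UNIV. A $ i $ k * (\<Sum>j\<in>UNIV. B $ k $ j))" for i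
    unfolding matrix_mult_nth sum_distrib_left by (rule sum.swap)
  then show ?thesis
    using assms unfolding row_stochastic_def matrix_mult_nth by (simp add: sum_nonneg)
qed

lemma row_stochastic_mat_1: "row_stochastic (mat 1)"
  by (simp add: row_stochastic_def mat_def)

lemma row_stochastic_mat_pow: "row_stochastic A \<Longrightarrow> row_stochastic (mat_pow A t)"
  by (induction t) (simp_all add: row_stochastic_mat_1 row_stochastic_mult)

lemma row_stochastic_limit:
  assumes "\<And>t. row_stochastic (X t)" and "X \<longlonglongrightarrow> H"
  shows "row_stochastic H"
proof -
  have lim: "(\<lambda>t. X t $ i $ j) \<longlonglongrightarrow> H $ i $ j" for i j
    by (intro tendsto_vec_nth assms(2))
  have "(\<lambda>t. \<Sum>j\<in>UNIV. X t $ i $ j) \<longlonglongrightarrow> (\<Sum>j\<in>UNIV. H $ i $ j)" for i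
    by (intro tendsto_sum lim)
  then have "(\<Sum>j\<in>UNIV. H $ i $ j) = 1" for i
    using assms(1) by (simp add: row_stochastic_def LIMSEQ_const_iff)
  moreover have "0 \<le> H $ i $ j" for i j
    using lim by (rule LIMSEQ_le_const) (use assms(1) row_stochastic_nonneg in blast)
  ultimately show ?thesis
    by (simp add: row_stochastic_def)
qed

lemma row_stochastic_mult_column_bounds:
  assumes "row_stochastic B" and "\<And>k. lo \<le> C $ k $ j \<and> C $ k $ j \<le> hi"
  shows "lo \<le> (B ** C) $ i $ j \<and> (B ** C) $ i $ j \<le> hi"
  using weighted_sum_bounds[of UNIV "\<lambda>k. B $ i $ k" lo "\<lambda>k. C $ k $ j" hi] assms
  by (simp add: matrix_mult_nth row_stochastic_def)

text \<open>Doeblin's contraction step: the new interval has width \<open>(1 - \<delta>) (hi - lo)\<close> and is the same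
  for every row \<open>i\<close> with \<open>\<delta> \<le> B $ i $ l\<close>.\<close>
lemma row_stochastic_mult_column_contract:
  assumes "row_stochastic B" and "0 \<le> \<delta>" and "\<delta> \<le> B $ i $ l"
    and "\<And>k. lo \<le> C $ k $ j \<and> C $ k $ j \<le> hi"
  shows "\<delta> * C $ l $ j + (1 - \<delta>) * lo \<le> (B ** C) $ i $ j \<and>
         (B ** C) $ i $ j \<le> \<delta> * C $ l $ j + (1 - \<delta>) * hi"
proof -
  define w where "w k = B $ i $ k - (if k = l then \<delta> else 0)" for k
  have "sum w UNIV = 1 - \<delta>"
    using assms(1) by (simp add: w_def row_stochastic_def sum_subtractf)
  moreover have "(B ** C) $ i $ j = \<delta> * C $ l $ j + (\<Sum>k\<in>UNIV. w k * C $ k $ j)"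
    by (simp add: matrix_mult_nth w_def left_diff_distrib sum_subtractf
        if_distrib[of "\<lambda>x. x * _"] cong: if_cong)
  moreover have "\<And>k. 0 \<le> w k"
    using assms(1,3) by (simp add: w_def row_stochastic_def)
  ultimately show ?thesis
    using weighted_sum_bounds[of UNIV w lo "\<lambda>k. C $ k $ j" hi] assms(4) by auto
qed

section \<open>Primitive matrices\<close>

lemma mat_pow_pos_iff_relpow:
  assumes "row_stochastic A"
  shows "0 < mat_pow A m $ i $ j \<longleftrightarrow> (i, j) \<in> graph_edges A ^^ m"
proof (induction m arbitrary: j)
  case 0
  then show ?case by (simp add: mat_def)
next
  case (Suc m)
  have nonneg: "0 \<le> mat_pow A m $ i $ k * A $ k $ j" for k
    using assms row_stochastic_mat_pow row_stochastic_nonneg by (metis mult_nonneg_nonneg)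
  have "0 < mat_pow A (Suc m) $ i $ j \<longleftrightarrow> (\<exists>k. 0 < mat_pow A m $ i $ k * A $ k $ j)"
    using nonneg sum_nonneg_eq_0_iff[of UNIV "\<lambda>k. mat_pow A m $ i $ k * A $ k $ j"]
    by (simp add: matrix_mult_nth less_le sum_nonneg)
  also have "\<dots> \<longleftrightarrow> (\<exists>k. 0 < mat_pow A m $ i $ k \<and> 0 < A $ k $ j)"
    using assms row_stochastic_mat_pow row_stochastic_nonneg
    by (metis linorder_not_le mult_pos_pos zero_less_mult_iff)
  also have "\<dots> \<longleftrightarrow> (i, j) \<in> graph_edges A ^^ Suc m"
    using Suc.IH by (auto simp: graph_edges_def)
  finally show ?case .
qed

lemma nat_add_submonoid_Gcd_1_consecutive:
  fixes S :: "nat set"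
  assumes "0 \<in> S" and add: "\<And>x y. x \<in> S \<Longrightarrow> y \<in> S \<Longrightarrow> x + y \<in> S" and "Gcd S = 1"
  obtains y where "y \<in> S" and "y + 1 \<in> S"
proof -
  define G where "G = {k. \<exists>x\<in>S. \<exists>y\<in>S. x = y + k}"
  have G_add: "a + b \<in> G" if ab: "a \<in> G" "b \<in> G" for a b
  proof -
    obtain x y x' y' where "x \<in> S" "y \<in> S" "x = y + a" "x' \<in> S" "y' \<in> S" "x' = y' + b"
      using ab unfolding G_def by blast
    then show ?thesis
      unfolding G_def by (intro CollectI bexI[of _ "x + x'"] bexI[of _ "y + y'"]) (auto intro: add)
  qed
  have G_diff: "a - b \<in> G" if ab: "a \<in> G" "b \<in> G" "b \<le> a" for a b
  proof -
    obtain x y x' y' where "x \<in> S" "y \<in> S" "x = y + a" "x' \<in> S" "y' \<in> S" "x' = y' + b"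
      using ab(1,2) unfolding G_def by blast
    then show ?thesis
      unfolding G_def using ab(3) by (intro CollectI bexI[of _ "x + y'"] bexI[of _ "y + x'"]) (auto intro: add)
  qed
  have S_G: "s \<in> G" if "s \<in> S" for s
    unfolding G_def using that \<open>0 \<in> S\<close> by force
  have G_mult: "q * a \<in> G" if "a \<in> G" for a q
    by (induction q) (simp_all add: G_add S_G \<open>0 \<in> S\<close> that)
  have "\<not> S \<subseteq> {0}"
    using \<open>Gcd S = 1\<close> Gcd_0_iff[of S] by auto
  then obtain s where s: "s \<in> S" "0 < s"
    by blast
  text \<open>The least positive element \<open>d\<close> of the difference set \<open>G\<close> divides every element of \<open>S\<close>
    (the remainder of a division by \<open>d\<close> stays in \<open>G\<close>), so it divides \<open>Gcd S = 1\<close>.\<close>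
  define d where "d = (LEAST k. k \<in> G \<and> 0 < k)"
  have d: "d \<in> G" "0 < d"
    using LeastI[of "\<lambda>k. k \<in> G \<and> 0 < k" s] S_G s unfolding d_def by auto
  have d_min: "d \<le> k" if "k \<in> G" "0 < k" for k
    unfolding d_def using that by (intro Least_le) simp
  have "d dvd x" if "x \<in> S" for x
  proof -
    have "x - x div d * d \<in> G"
      using S_G[OF that] G_mult[OF d(1)] by (intro G_diff) auto
    then have "x mod d \<in> G"
      by (simp add: minus_div_mult_eq_mod)
    moreover have "x mod d < d"
      using d(2) by simp
    ultimately have "x mod d = 0"
      using d_min by (meson not_le neq0_conv)
    then show ?thesis by auto
  qed
  then have "d = 1"
    using \<open>Gcd S = 1\<close> Gcd_greatest[of S d] by simp
  then show ?thesis
    using that d(1) unfolding G_def by auto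
qed

lemma nat_add_submonoid_Gcd_1_cofinite:
  fixes S :: "nat set"
  assumes "0 \<in> S" and add: "\<And>x y. x \<in> S \<Longrightarrow> y \<in> S \<Longrightarrow> x + y \<in> S" and "Gcd S = 1"
  obtains N where "\<And>n. N \<le> n \<Longrightarrow> n \<in> S"
proof -
  obtain a where a: "a \<in> S" "a + 1 \<in> S"
    using nat_add_submonoid_Gcd_1_consecutive assms by blast
  have mult: "k * s \<in> S" if "s \<in> S" for k s
  proof (induction k)
    case 0
    then show ?case using \<open>0 \<in> S\<close> by simp
  next
    case (Suc k)
    then show ?case using add[OF that] by simp
  qed
  text \<open>Write \<open>n = q a + r\<close> with \<open>r < a\<close>; then \<open>a\<^sup>2 \<le> n\<close> forces \<open>r \<le> q\<close> and
    \<open>n = (q - r) a + r (a + 1)\<close>.\<close>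
  have "n \<in> S" if "a * a \<le> n" for n
  proof (cases "a = 0")
    case True
    then show ?thesis using mult[OF a(2), of n] by simp
  next
    case False
    define q r where "q = n div a" and "r = n mod a"
    have "r < a" "n = q * a + r"
      using False by (simp_all add: q_def r_def)
    then have "a * a < (q + 1) * a"
      using that by simp
    then have "r \<le> q"
      using \<open>r < a\<close> by (simp only: mult_less_cancel2) linarith
    then have "n = (q - r) * a + r * (a + 1)"
      using \<open>n = q * a + r\<close> by (simp add: algebra_simps diff_mult_distrib)
    then show ?thesis
      using add[OF mult[OF a(1)] mult[OF a(2)]] by simp
  qed
  then show ?thesis
    using that by blast
qed

lemma relpow_full_if_irreducible_aperiodic:
  fixes E :: "('a::finite \<times> 'a) set"
  assumes irr: "\<And>i j. (i, j) \<in> E\<^sup>*" and aper: "Gcd {m. 0 < m \<and> (\<exists>i. (i, i) \<in> E ^^ m)} = 1"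
  obtains M where "\<And>i j. (i, j) \<in> E ^^ M"
proof -
  fix r :: 'a
  have path: "\<exists>n. (i, j) \<in> E ^^ n" for i j
    using irr rtrancl_power by blast
  define D where "D = {m. (r, r) \<in> E ^^ m}"
  have D_add: "x + y \<in> D" if "x \<in> D" "y \<in> D" for x y
    using that relpow_trans[of r r x E r y] unfolding D_def by simp
  text \<open>Closing a cycle through \<open>r\<close> shows that the return times to \<open>r\<close> have the same gcd.\<close>
  have "Gcd D dvd c" if c: "0 < c \<and> (\<exists>i. (i, i) \<in> E ^^ c)" for c
  proof -
    obtain v a b where v: "(v, v) \<in> E ^^ c" and a: "(r, v) \<in> E ^^ a" and b: "(v, r) \<in> E ^^ b"
      using c path by blast
    have "a + b \<in> D" "a + c + b \<in> D"
      unfolding D_def using relpow_trans[OF a b] relpow_trans[OF relpow_trans[OF a v] b] by simp_all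
    then have "Gcd D dvd a + b" "Gcd D dvd (a + b) + c"
      by (auto intro: Gcd_dvd simp: ac_simps)
    then show ?thesis
      by (simp add: dvd_add_right_iff)
  qed
  then have "Gcd D dvd Gcd {m. 0 < m \<and> (\<exists>i. (i, i) \<in> E ^^ m)}"
    by (intro Gcd_greatest) blast
  then have "Gcd D = 1"
    using aper by simp
  moreover have "0 \<in> D"
    unfolding D_def by simp
  ultimately obtain N where "\<And>n. N \<le> n \<Longrightarrow> n \<in> D"
    using nat_add_submonoid_Gcd_1_cofinite D_add by blast
  then have N: "(r, r) \<in> E ^^ n" if "N \<le> n" for n
    using that unfolding D_def by blast
  obtain a where a: "\<And>i. (i, r) \<in> E ^^ a i"
    using choice[of "\<lambda>i n. (i, r) \<in> E ^^ n"] path by blast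
  obtain b where b: "\<And>j. (r, j) \<in> E ^^ b j"
    using choice[of "\<lambda>j n. (r, j) \<in> E ^^ n"] path by blast
  define M where "M = (\<Sum>i\<in>UNIV. a i) + N + (\<Sum>j\<in>UNIV. b j)"
  have "(i, j) \<in> E ^^ M" for i j
  proof -
    define m where "m = M - a i - b j"
    have "a i \<le> (\<Sum>i\<in>UNIV. a i)" "b j \<le> (\<Sum>j\<in>UNIV. b j)"
      by (simp_all add: member_le_sum)
    then have "M = a i + m + b j" and "N \<le> m"
      unfolding m_def M_def by linarith+
    then show ?thesis
      using relpow_trans[OF relpow_trans[OF a N] b] by presburger
  qed
  then show ?thesis
    using that by blast
qed

lemma mat_pow_column_bounds_persist:
  assumes "row_stochastic A" and "\<And>k. lo \<le> mat_pow A s $ k $ j \<and> mat_pow A s $ k $ j \<le> hi"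
    and "s \<le> t"
  shows "lo \<le> mat_pow A t $ i $ j \<and> mat_pow A t $ i $ j \<le> hi"
proof -
  have "mat_pow A t = mat_pow A (t - s) ** mat_pow A s"
    using \<open>s \<le> t\<close> mat_pow_add[of A "t - s" s] by simp
  then show ?thesis
    using row_stochastic_mult_column_bounds[OF row_stochastic_mat_pow[OF assms(1)] assms(2)] by simp
qed

lemma mat_pow_column_oscillation:
  assumes rs: "row_stochastic A" and "0 \<le> \<delta>" and \<delta>: "\<And>i. \<delta> \<le> mat_pow A M $ i $ l"
  shows "\<exists>lo hi. hi - lo \<le> (1 - \<delta>) ^ q \<and>
    (\<forall>t \<ge> q * M. \<forall>i. lo \<le> mat_pow A t $ i $ j \<and> mat_pow A t $ i $ j \<le> hi)"
proof (induction q)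
  case 0
  have "0 \<le> mat_pow A t $ i $ j \<and> mat_pow A t $ i $ j \<le> 1" for t i
    using row_stochastic_mat_pow[OF rs] by (simp add: row_stochastic_nonneg row_stochastic_le_1)
  then show ?case
    by (intro exI[of _ 0] exI[of _ 1]) simp
next
  case (Suc q)
  then obtain lo hi where osc: "hi - lo \<le> (1 - \<delta>) ^ q"
    and bounds: "\<And>t i. q * M \<le> t \<Longrightarrow> lo \<le> mat_pow A t $ i $ j \<and> mat_pow A t $ i $ j \<le> hi"
    by blast
  define c where "c = \<delta> * mat_pow A (q * M) $ l $ j"
  have step: "c + (1 - \<delta>) * lo \<le> mat_pow A (M + q * M) $ i $ j \<and>
      mat_pow A (M + q * M) $ i $ j \<le> c + (1 - \<delta>) * hi" for i
    unfolding mat_pow_add c_def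
    by (rule row_stochastic_mult_column_contract[OF row_stochastic_mat_pow[OF rs] \<open>0 \<le> \<delta>\<close> \<delta>])
      (simp add: bounds)
  have "\<forall>t \<ge> Suc q * M. \<forall>i. c + (1 - \<delta>) * lo \<le> mat_pow A t $ i $ j \<and>
      mat_pow A t $ i $ j \<le> c + (1 - \<delta>) * hi"
    using mat_pow_column_bounds_persist[OF rs step] by simp
  moreover have "\<delta> \<le> 1"
    using \<delta>[of l] row_stochastic_le_1[OF row_stochastic_mat_pow[OF rs], of M l l] by linarith
  then have "(c + (1 - \<delta>) * hi) - (c + (1 - \<delta>) * lo) \<le> (1 - \<delta>) ^ Suc q"
    using osc by (simp add: right_diff_distrib[symmetric] mult_left_mono)
  ultimately show ?case
    by blast
qed

lemma mat_pow_tendsto_ones_outer: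
  assumes rs: "row_stochastic A" and pos: "\<And>i j. 0 < mat_pow A M $ i $ j"
    and p: "prob_vector p" and stationary: "p v* A = p"
  shows "mat_pow A \<longlonglongrightarrow> ones_outer p"
  unfolding tendsto_mat_iff
proof (intro allI)
  fix i j
  define \<delta> where "\<delta> = Min (range (\<lambda>k. mat_pow A M $ k $ j))"
  have "0 < \<delta>"
    unfolding \<delta>_def using pos by (subst Min_gr_iff) auto
  have \<delta>_le: "\<delta> \<le> mat_pow A M $ k $ j" for k
    unfolding \<delta>_def by (rule Min_le) auto
  show "(\<lambda>t. mat_pow A t $ i $ j) \<longlonglongrightarrow> ones_outer p $ i $ j"
  proof (rule LIMSEQ_I)
    fix r :: real
    assume "0 < r"
    obtain q where q: "(1 - \<delta>) ^ q < r"
      using real_arch_pow_inv[OF \<open>0 < r\<close>, of "1 - \<delta>"] \<open>0 < \<delta>\<close> by auto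
    obtain lo hi where osc: "hi - lo \<le> (1 - \<delta>) ^ q"
      and bounds: "\<And>t k. q * M \<le> t \<Longrightarrow> lo \<le> mat_pow A t $ k $ j \<and> mat_pow A t $ k $ j \<le> hi"
      using mat_pow_column_oscillation[OF rs less_imp_le[OF \<open>0 < \<delta>\<close>] \<delta>_le] by blast
    text \<open>The stationary \<open>p\<close> averages column \<open>j\<close> of every power into \<open>p $ j\<close>.\<close>
    have "norm (mat_pow A t $ i $ j - p $ j) < r" if "q * M \<le> t" for t
    proof -
      have "p $ j = (\<Sum>k\<in>UNIV. p $ k * mat_pow A t $ k $ j)"
        using arg_cong[where f="\<lambda>v. v $ j", OF vector_mat_pow_fixed[OF stationary, of t]]
        by (simp add: vector_matrix_mult_def mult.commute)
      then have "lo \<le> p $ j \<and> p $ j \<le> hi"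
        using weighted_sum_bounds[of UNIV "\<lambda>k. p $ k" lo "\<lambda>k. mat_pow A t $ k $ j" hi] p bounds[OF that]
        by (simp add: prob_vector_def)
      then show ?thesis
        unfolding real_norm_def abs_less_iff using bounds[OF that, of i] osc q by linarith
    qed
    then show "\<exists>t0. \<forall>t\<ge>t0. norm (mat_pow A t $ i $ j - ones_outer p $ i $ j) < r"
      by (auto simp: ones_outer_def)
  qed
qed

section \<open>Absorbing chains\<close>

lemma rtrancl_reaches_set:
  assumes "(i, s) \<in> R\<^sup>*" and "s \<in> S" and "\<And>x y. (x, y) \<in> R \<Longrightarrow> x \<notin> S \<Longrightarrow> (x, y) \<in> R'"
  shows "\<exists>s'\<in>S. (i, s') \<in> R'\<^sup>*"
  using assms(1)
proof (induction rule: converse_rtrancl_induct)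
  case base
  then show ?case using assms(2) by blast
next
  case (step x y)
  then show ?case
    using assms(3) by (cases "x \<in> S") (auto intro: converse_rtrancl_into_rtrancl)
qed

locale absorbing_chain =
  fixes A :: "real^'n^'n" and S :: "'n set"
  assumes row_stochastic: "row_stochastic A"
    and absorbing: "\<And>i j. i \<in> S \<Longrightarrow> A $ i $ j = (if i = j then 1 else 0)"
    and reaches_absorbing: "\<And>i. \<exists>s\<in>S. (i, s) \<in> (graph_edges A)\<^sup>*"
begin

lemma mat_pow_nonneg: "0 \<le> mat_pow A t $ i $ j"
  using row_stochastic row_stochastic_mat_pow row_stochastic_nonneg by blast

lemma mat_pow_absorbing:
  assumes "i \<in> S"
  shows "mat_pow A t $ i $ j = (if i = j then 1 else 0)"
proof (induction t arbitrary: j)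
  case 0
  then show ?case by (simp add: mat_def)
next
  case (Suc t)
  then show ?case
    using assms by (simp add: mat_pow_Suc_left matrix_mult_nth absorbing if_distrib[of "\<lambda>x. x * _"]
        cong: if_cong)
qed

definition transient_mass :: "nat \<Rightarrow> 'n \<Rightarrow> real" where
  "transient_mass t i = (\<Sum>k\<in>-S. mat_pow A t $ i $ k)"

lemma transient_mass_nonneg: "0 \<le> transient_mass t i"
  unfolding transient_mass_def by (simp add: sum_nonneg mat_pow_nonneg)

lemma transient_mass_le_1: "transient_mass t i \<le> 1"
proof -
  have "transient_mass t i \<le> (\<Sum>k\<in>UNIV. mat_pow A t $ i $ k)"
    unfolding transient_mass_def by (rule sum_mono2) (simp_all add: mat_pow_nonneg)
  then show ?thesis
    using row_stochastic_mat_pow[OF row_stochastic] by (simp add: row_stochastic_def)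
qed

lemma transient_mass_absorbing: "i \<in> S \<Longrightarrow> transient_mass t i = 0"
  unfolding transient_mass_def by (simp add: mat_pow_absorbing sum.neutral)

lemma transient_mass_add:
  "transient_mass (s + t) i = (\<Sum>k\<in>UNIV. mat_pow A s $ i $ k * transient_mass t k)"
  unfolding transient_mass_def mat_pow_add matrix_mult_nth sum_distrib_left
  by (rule sum.swap)

lemma transient_mass_Suc_le: "transient_mass (Suc t) i \<le> transient_mass t i"
proof -
  have "transient_mass (t + 1) i = (\<Sum>k\<in>UNIV. mat_pow A t $ i $ k * transient_mass 1 k)"
    by (rule transient_mass_add)
  also have "\<dots> \<le> (\<Sum>k\<in>UNIV. mat_pow A t $ i $ k * (if k \<in> S then 0 else 1))"
    by (intro sum_mono mult_left_mono)
      (simp_all add: transient_mass_absorbing transient_mass_le_1 mat_pow_nonneg)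
  also have "\<dots> = transient_mass t i"
    unfolding transient_mass_def
    by (simp add: if_distrib[of "\<lambda>x. _ * x"] sum.If_cases Compl_eq_Diff_UNIV cong: if_cong)
  finally show ?thesis by simp
qed

lemma transient_mass_antimono: "s \<le> t \<Longrightarrow> transient_mass t i \<le> transient_mass s i"
  by (rule lift_Suc_antimono_le[of "\<lambda>t. transient_mass t i", OF transient_mass_Suc_le])

text \<open>Along a path to \<open>S\<close>, each edge passes part of the absorbed mass one step back.\<close>
lemma transient_mass_lt_1: "\<exists>t. transient_mass t i < 1"
proof -
  obtain s where "s \<in> S" and "(i, s) \<in> (graph_edges A)\<^sup>*"
    using reaches_absorbing by blast
  from this(2) show ?thesis
  proof (induction rule: converse_rtrancl_induct)
    case base
    show ?case
      using transient_mass_absorbing[OF \<open>s \<in> S\<close>] by (intro exI[of _ 0]) simp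
  next
    case (step y w)
    then obtain t where t: "transient_mass t w < 1" by blast
    have "0 < A $ y $ w * (1 - transient_mass t w)"
      using step(1) t by (simp add: graph_edges_def)
    also have "\<dots> \<le> (\<Sum>k\<in>UNIV. A $ y $ k * (1 - transient_mass t k))"
      by (rule member_le_sum)
        (simp_all add: row_stochastic row_stochastic_nonneg transient_mass_le_1)
    also have "\<dots> = 1 - transient_mass (1 + t) y"
      using row_stochastic transient_mass_add[of 1 t y]
      by (simp add: right_diff_distrib sum_subtractf row_stochastic_def)
    finally show ?case by auto
  qed
qed

lemma transient_mass_tendsto_0: "(\<lambda>t. transient_mass t i) \<longlonglongrightarrow> 0"
proof -
  obtain \<tau> where \<tau>: "\<And>k. transient_mass (\<tau> k) k < 1"
    using choice[of "\<lambda>k t. transient_mass t k < 1"] transient_mass_lt_1 by blast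
  define T where "T = (\<Sum>k\<in>UNIV. \<tau> k)"
  define c where "c = Max (range (transient_mass T))"
  have "transient_mass T k < 1" for k
  proof -
    have "\<tau> k \<le> T"
      unfolding T_def by (simp add: member_le_sum)
    then show ?thesis
      using \<tau>[of k] transient_mass_antimono[of "\<tau> k" T k] by linarith
  qed
  then have "c < 1"
    unfolding c_def by (subst Max_less_iff) auto
  have c: "transient_mass T k \<le> c" for k
    unfolding c_def by (rule Max_ge) auto
  text \<open>Geometric decay: after every \<open>T\<close> steps at most a fraction \<open>c\<close> of the mass remains transient.\<close>
  have decay: "transient_mass (q * T) k \<le> c ^ q" for q k
  proof (induction q arbitrary: k)
    case 0
    then show ?case by (simp add: transient_mass_le_1)
  next
    case (Suc q)
    have "transient_mass (T + q * T) k \<le> (\<Sum>k'\<in>UNIV. mat_pow A T $ k $ k' * (if k' \<in> S then 0 else c ^ q))"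
      unfolding transient_mass_add
      by (intro sum_mono mult_left_mono) (simp_all add: Suc.IH transient_mass_absorbing mat_pow_nonneg)
    also have "\<dots> = c ^ q * transient_mass T k"
      unfolding transient_mass_def
      by (simp add: if_distrib[of "\<lambda>x. _ * x"] sum.If_cases Compl_eq_Diff_UNIV sum_distrib_left
          mult.commute cong: if_cong)
    also have "\<dots> \<le> c ^ q * c"
      using c[of k] transient_mass_nonneg[of T k] by (intro mult_left_mono) simp_all
    finally show ?case by (simp add: mult.commute)
  qed
  show ?thesis
  proof (rule LIMSEQ_I)
    fix r :: real
    assume "0 < r"
    obtain q where "c ^ q < r"
      using real_arch_pow_inv[OF \<open>0 < r\<close> \<open>c < 1\<close>] by blast
    then have "norm (transient_mass t i - 0) < r" if "q * T \<le> t" for t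
      using decay[of q i] transient_mass_antimono[OF that, of i] transient_mass_nonneg[of t i] by simp
    then show "\<exists>t0. \<forall>t\<ge>t0. norm (transient_mass t i - 0) < r"
      by blast
  qed
qed

lemma mat_pow_transient_column_tendsto_0:
  assumes "j \<notin> S"
  shows "(\<lambda>t. mat_pow A t $ i $ j) \<longlonglongrightarrow> 0"
proof -
  have "mat_pow A t $ i $ j \<le> transient_mass t i" for t
    unfolding transient_mass_def using assms by (intro member_le_sum) (simp_all add: mat_pow_nonneg)
  then show ?thesis
    using mat_pow_nonneg
    by (intro tendsto_sandwich[OF _ _ tendsto_const transient_mass_tendsto_0[of i]]) simp_all
qed

lemma convergent_mat_pow_entry: "convergent (\<lambda>t. mat_pow A t $ i $ j)"
proof (cases "j \<in> S")
  case True
  have "mat_pow A t $ i $ j \<le> mat_pow A (Suc t) $ i $ j" for t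
  proof -
    have "mat_pow A t $ i $ j * A $ j $ j \<le> (\<Sum>k\<in>UNIV. mat_pow A t $ i $ k * A $ k $ j)"
      by (rule member_le_sum) (simp_all add: mat_pow_nonneg row_stochastic row_stochastic_nonneg)
    then show ?thesis
      using True by (simp add: matrix_mult_nth absorbing)
  qed
  then have "incseq (\<lambda>t. mat_pow A t $ i $ j)"
    by (rule incseq_SucI)
  moreover have "\<forall>t. mat_pow A t $ i $ j \<le> 1"
    using row_stochastic_le_1[OF row_stochastic_mat_pow[OF row_stochastic]] by blast
  ultimately obtain L where "(\<lambda>t. mat_pow A t $ i $ j) \<longlonglongrightarrow> L"
    by (rule incseq_convergent)
  then show ?thesis
    by (rule convergentI)
next
  case False
  then show ?thesis
    by (rule convergentI[OF mat_pow_transient_column_tendsto_0])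
qed

text \<open>The limit \<open>H\<close> vanishes on the transient columns, so \<open>H ** X\<close> only depends on the rows of
  \<open>X\<close> in \<open>S\<close>; a solution \<open>X\<close> therefore satisfies \<open>X = H ** X = H ** H = H\<close>.\<close>
theorem tendsto_mat_pow_unique_fixed:
  obtains H where "mat_pow A \<longlonglongrightarrow> H"
    and "\<And>X. A ** X = X \<and> (\<forall>i\<in>S. \<forall>j. X $ i $ j = (if i = j then 1 else 0)) \<longleftrightarrow> X = H"
proof -
  define H where "H = (\<chi> i j. lim (\<lambda>t. mat_pow A t $ i $ j))"
  have entry: "(\<lambda>t. mat_pow A t $ i $ j) \<longlonglongrightarrow> H $ i $ j" for i j
    unfolding H_def using convergent_mat_pow_entry by (simp add: convergent_LIMSEQ_iff)
  then have lim: "mat_pow A \<longlonglongrightarrow> H"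
    by (simp add: tendsto_mat_iff)
  have H_absorbing: "H $ i $ j = (if i = j then 1 else 0)" if "i \<in> S" for i j
    using entry[of i j] mat_pow_absorbing[OF that] by (simp add: LIMSEQ_const_iff)
  have H_transient: "H $ i $ k = 0" if "k \<notin> S" for i k
    using LIMSEQ_unique[OF entry mat_pow_transient_column_tendsto_0[OF that]] .
  have "X = H" if X: "A ** X = X" "\<forall>i\<in>S. \<forall>j. X $ i $ j = (if i = j then 1 else 0)" for X
  proof -
    have "H $ i $ k * X $ k $ j = H $ i $ k * H $ k $ j" for i j k
      using X(2) H_absorbing H_transient by (cases "k \<in> S") simp_all
    then have "H ** X = H ** H"
      unfolding vec_eq_iff matrix_mult_nth by presburger
    then show ?thesis
      using mat_pow_limit_mult_fixed[OF lim X(1)] mat_pow_limit_mult_fixed[OF lim mat_pow_limit_fixed[OF lim]]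
      by simp
  qed
  then show ?thesis
    using that lim mat_pow_limit_fixed[OF lim] H_absorbing by blast
qed

end

section \<open>The matrices \<open>W(z)\<close>\<close>

lemma W_mat_nth: "W_mat P z $ i $ j = (1 - z $ i) * P $ i $ j + (if i = j then z $ i else 0)"
  by (simp add: W_mat_def mat_1_minus_diag_mat diag_mat_mult_nth) (simp add: diag_mat_def)

lemma W_mat_mult_nth: "(W_mat P z ** X) $ i $ j = (1 - z $ i) * (P ** X) $ i $ j + z $ i * X $ i $ j"
  by (simp add: matrix_mult_nth W_mat_nth distrib_right sum.distrib sum_distrib_left mult.assoc
      if_distrib[of "\<lambda>x. x * _"] cong: if_cong)

lemma W_mat_S_set: "i \<in> S_set z \<Longrightarrow> W_mat P z $ i $ j = (if i = j then 1 else 0)"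
  by (auto simp: W_mat_nth S_set_def)

lemma row_stochastic_W_mat:
  assumes "row_stochastic P" and "\<forall>i. 0 \<le> z $ i \<and> z $ i \<le> 1"
  shows "row_stochastic (W_mat P z)"
  using assms
  by (simp add: row_stochastic_def W_mat_nth sum.distrib sum_distrib_left[symmetric])

lemma graph_edges_W_mat:
  assumes "row_stochastic P" and "\<forall>i. 0 \<le> z $ i \<and> z $ i \<le> 1"
    and "(i, k) \<in> graph_edges P" and "i \<notin> S_set z"
  shows "(i, k) \<in> graph_edges (W_mat P z)"
proof -
  have "0 < (1 - z $ i) * P $ i $ k"
    using assms(2-4) by (simp add: S_set_def graph_edges_def less_le)
  then show ?thesis
    using assms(2) by (simp add: graph_edges_def W_mat_nth add_pos_nonneg)
qed

lemma H_system_iff: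
  "H_system P z X \<longleftrightarrow>
    W_mat P z ** X = X \<and> (\<forall>i\<in>S_set z. \<forall>j. X $ i $ j = (if i = j then 1 else 0))"
proof -
  have "(W_mat P z ** X) $ i $ j = X $ i $ j \<longleftrightarrow> X $ i $ j = (P ** X) $ i $ j"
    if "i \<notin> S_set z" for i j
  proof -
    have "1 - z $ i \<noteq> 0"
      using that by (simp add: S_set_def)
    moreover have "(W_mat P z ** X) $ i $ j - X $ i $ j = (1 - z $ i) * ((P ** X) $ i $ j - X $ i $ j)"
      unfolding W_mat_mult_nth by (simp add: algebra_simps)
    ultimately show ?thesis
      by auto
  qed
  moreover have "(W_mat P z ** X) $ i $ j = X $ i $ j" if "i \<in> S_set z" for i j
    using that by (simp add: W_mat_mult_nth S_set_def)
  ultimately show ?thesis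
    unfolding H_system_def vec_eq_iff matrix_mult_nth by blast
qed

lemma p_vec_nth:
  assumes "\<And>i. z $ i \<noteq> 1"
  shows "p_vec \<pi> z $ k = \<pi> $ k / ((1 - z $ k) * gamma_fun \<pi> z)"
proof -
  have "matrix_inv (mat 1 - diag_mat z) = diag_mat (\<chi> i. 1 / (1 - z $ i))"
    using assms by (simp add: mat_1_minus_diag_mat matrix_inv_diag_mat)
  then show ?thesis
    by (simp add: p_vec_def matrix_vector_mult_def diag_mat_def if_distrib[of "\<lambda>x. x * _"]
        cong: if_cong)
qed

lemma prob_vector_p_vec:
  assumes "prob_vector \<pi>" and "\<And>i. 0 \<le> z $ i \<and> z $ i < 1"
  shows "prob_vector (p_vec \<pi> z)"
proof -
  have z: "z $ i \<noteq> 1" "0 < 1 - z $ i" for i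
    using assms(2)[of i] by simp_all
  have "\<pi> $ i \<le> \<pi> $ i / (1 - z $ i)" for i
    using assms(1) z(2)[of i] assms(2)[of i] by (simp add: prob_vector_def le_divide_eq mult_left_le)
  then have "(\<Sum>i\<in>UNIV. \<pi> $ i) \<le> gamma_fun \<pi> z"
    unfolding gamma_fun_def by (rule sum_mono)
  then have "0 < gamma_fun \<pi> z"
    using assms(1) by (simp add: prob_vector_def)
  then have "0 \<le> p_vec \<pi> z $ k" for k
    unfolding p_vec_nth[OF z(1)] using assms(1) z(2)
    by (intro divide_nonneg_pos mult_pos_pos) (simp_all add: prob_vector_def)
  moreover have "(\<Sum>k\<in>UNIV. p_vec \<pi> z $ k) = gamma_fun \<pi> z / gamma_fun \<pi> z"
    unfolding gamma_fun_def[of \<pi> z] sum_divide_distrib by (simp add: p_vec_nth[OF z(1)] gamma_fun_def)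
  ultimately show ?thesis
    using \<open>0 < gamma_fun \<pi> z\<close> by (simp add: prob_vector_def)
qed

lemma p_vec_stationary:
  assumes "\<pi> v* P = \<pi>" and "\<And>i. z $ i \<noteq> 1"
  shows "p_vec \<pi> z v* W_mat P z = p_vec \<pi> z"
proof -
  define p where "p = p_vec \<pi> z"
  define g where "g = gamma_fun \<pi> z"
  have p: "p $ i * (1 - z $ i) = \<pi> $ i / g" for i
    using assms(2)[of i] by (cases "g = 0") (simp_all add: p_def g_def p_vec_nth[OF assms(2)])
  have "(p v* W_mat P z) $ j = p $ j" for j
  proof -
    have "(p v* W_mat P z) $ j = (\<Sum>i\<in>UNIV. p $ i * (1 - z $ i) * P $ i $ j) + p $ j * z $ j"
      by (simp add: vector_matrix_mult_def W_mat_nth distrib_left sum.distrib mult.assoc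
          if_distrib[of "\<lambda>x. _ * x"] cong: if_cong)
    also have "\<dots> = (\<Sum>i\<in>UNIV. \<pi> $ i * P $ i $ j) / g + p $ j * z $ j"
      by (simp add: p sum_divide_distrib)
    also have "\<dots> = p $ j * (1 - z $ j) + p $ j * z $ j"
      using arg_cong[where f="\<lambda>v. v $ j", OF assms(1)] p[of j]
      by (simp add: vector_matrix_mult_def mult.commute)
    also have "\<dots> = p $ j"
      by (simp add: algebra_simps)
    finally show ?thesis .
  qed
  then show ?thesis
    by (simp add: p_def vec_eq_iff)
qed

lemma tendsto_mat_pow_W_mat_S_empty:
  assumes P: "row_stochastic P" "irreducible_mat P" "aperiodic_mat P"
    and \<pi>: "prob_vector \<pi>" "\<pi> v* P = \<pi>"
    and z: "\<forall>i. 0 \<le> z $ i \<and> z $ i \<le> 1" and "S_set z = {}"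
  shows "mat_pow (W_mat P z) \<longlonglongrightarrow> ones_outer (p_vec \<pi> z)"
proof -
  have z1: "z $ i \<noteq> 1" for i
    using \<open>S_set z = {}\<close> by (auto simp: S_set_def)
  obtain M where M: "\<And>i j. (i, j) \<in> graph_edges P ^^ M"
    using relpow_full_if_irreducible_aperiodic[of "graph_edges P"] P(2,3)
    unfolding irreducible_mat_def aperiodic_mat_def cycle_lengths_def by blast
  have "(i, j) \<in> graph_edges (W_mat P z) ^^ M" for i j
    using graph_edges_W_mat[OF P(1) z] \<open>S_set z = {}\<close> by (intro relpowp_mono[to_set, OF _ M]) blast
  then have "0 < mat_pow (W_mat P z) M $ i $ j" for i j
    using mat_pow_pos_iff_relpow[OF row_stochastic_W_mat[OF P(1) z]] by blast
  moreover have "prob_vector (p_vec \<pi> z)"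
    using \<pi>(1) z z1 by (intro prob_vector_p_vec) (auto simp: less_le)
  ultimately show ?thesis
    using mat_pow_tendsto_ones_outer row_stochastic_W_mat[OF P(1) z] p_vec_stationary[OF \<pi>(2) z1]
    by blast
qed

lemma tendsto_mat_pow_W_mat_S_nonempty:
  assumes P: "row_stochastic P" "irreducible_mat P"
    and z: "\<forall>i. 0 \<le> z $ i \<and> z $ i \<le> 1" and "S_set z \<noteq> {}"
  obtains H where "mat_pow (W_mat P z) \<longlonglongrightarrow> H" and "\<And>X. H_system P z X \<longleftrightarrow> X = H"
proof -
  obtain s where "s \<in> S_set z"
    using \<open>S_set z \<noteq> {}\<close> by blast
  have "\<exists>s'\<in>S_set z. (i, s') \<in> (graph_edges (W_mat P z))\<^sup>*" for i
    using P(2) unfolding irreducible_mat_def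
    by (intro rtrancl_reaches_set[OF _ \<open>s \<in> S_set z\<close> graph_edges_W_mat[OF P(1) z]]) simp_all
  then interpret absorbing_chain "W_mat P z" "S_set z"
    using row_stochastic_W_mat[OF P(1) z] W_mat_S_set by unfold_locales
  show ?thesis
    using that unfolding H_system_iff by (rule tendsto_mat_pow_unique_fixed)
qed

theorem lemma1:
  fixes P :: "real^'n^'n" and \<pi> :: "real^'n"
  assumes "row_stochastic P" and "irreducible_mat P" and "aperiodic_mat P"
    and "prob_vector \<pi>" and "transpose P *v \<pi> = \<pi>"
  shows "\<forall>z::real^'n. (\<forall>i. 0 \<le> z $ i \<and> z $ i \<le> 1) \<longrightarrow>
    (\<exists>H. (\<lambda>t. mat_pow (W_mat P z) t) \<longlonglongrightarrow> H \<and> row_stochastic H \<and>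
         (S_set z = {} \<longrightarrow> H = ones_outer (p_vec \<pi> z)) \<and>
         (S_set z \<noteq> {} \<longrightarrow> H_system P z H \<and> (\<forall>X. H_system P z X \<longrightarrow> X = H)))"
proof (intro allI impI)
  fix z :: "real^'n"
  assume z: "\<forall>i. 0 \<le> z $ i \<and> z $ i \<le> 1"
  have stationary: "\<pi> v* P = \<pi>"
    using assms(5) by simp
  have limit_row_stochastic: "row_stochastic H" if "mat_pow (W_mat P z) \<longlonglongrightarrow> H" for H
    using row_stochastic_mat_pow[OF row_stochastic_W_mat[OF assms(1) z]] that
    by (rule row_stochastic_limit)
  show "\<exists>H. (\<lambda>t. mat_pow (W_mat P z) t) \<longlonglongrightarrow> H \<and> row_stochastic H \<and>
         (S_set z = {} \<longrightarrow> H = ones_outer (p_vec \<pi> z)) \<and>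
         (S_set z \<noteq> {} \<longrightarrow> H_system P z H \<and> (\<forall>X. H_system P z X \<longrightarrow> X = H))"
  proof (cases "S_set z = {}")
    case True
    have "mat_pow (W_mat P z) \<longlonglongrightarrow> ones_outer (p_vec \<pi> z)"
      by (rule tendsto_mat_pow_W_mat_S_empty[OF assms(1-4) stationary z True])
    then show ?thesis
      using True limit_row_stochastic by blast
  next
    case False
    then obtain H where "mat_pow (W_mat P z) \<longlonglongrightarrow> H" and "\<And>X. H_system P z X \<longleftrightarrow> X = H"
      using tendsto_mat_pow_W_mat_S_nonempty[OF assms(1,2) z] by blast
    then show ?thesis
      using False limit_row_stochastic by blast
  qed
qed

end
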